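(* Identify $\mathbb{R}^2$ with $\mathbb{C}$, let $\tau=\frac{1+\sqrt5}{2}$, $\xi=e^{i\pi/5}$, $\alpha_1=1$, $\alpha_2=e^{4\pi i/5}$, $\alpha_H=\tau(\alpha_1+\alpha_2)$. Let $r_1,r_2:\mathbb{C}\to\mathbb{C}$ be $r_j(v)=v-2\,\mathrm{Re}(v\overline{\alpha_j})\,\alpha_j$ (reflection in the line through $0$ orthogonal to $\alpha_j$), and $T(v)=v+\alpha_H$. For $n\in\mathbb{N}_0$ let $Q_2(n)$ be the set of all points $w(0)$, where $w$ ranges over all finite compositions of the maps $T,r_1,r_2$ (including the empty composition) in which $T$ occurs at most $n$ times. Then $$Q_2(n)=\Big\{\sum_{j=0}^9 n_j\xi^j \;\Big|\; n_j\in\mathbb{N}_0,\ \sum_{j=0}^9 n_j=l\le n\Big\}.$$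
   Context: $\mathbb{N}_0$ denotes the nonnegative integers. Note $\alpha_H=e^{2\pi i/5}$ has length $1$, and $\{\xi^j: 0\le j\le 9\}$ is the root system of the Coxeter group $H_2$ (dihedral group of order 10) generated by $r_1,r_2$. *)

theory Defs
  imports Complex_Main
begin

definition tau :: real where "tau = (1 + sqrt 5) / 2"
definition xi :: complex where "xi = cis (pi / 5)"
definition alpha1 :: complex where "alpha1 = 1"
definition alpha2 :: complex where "alpha2 = cis (4 * pi / 5)"
definition alphaH :: complex where "alphaH = of_real tau * (alpha1 + alpha2)"

definition refl :: "complex \<Rightarrow> complex \<Rightarrow> complex" where
  "refl a v = v - of_real (2 * Re (v * cnj a)) * a"

definition r1 :: "complex \<Rightarrow> complex" where "r1 = refl alpha1"
definition r2 :: "complex \<Rightarrow> complex" where "r2 = refl alpha2"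
definition Tr :: "complex \<Rightarrow> complex" where "Tr v = v + alphaH"

datatype gen = GT | GR1 | GR2

fun gen_map :: "gen \<Rightarrow> complex \<Rightarrow> complex" where
  "gen_map GT = Tr"
| "gen_map GR1 = r1"
| "gen_map GR2 = r2"

definition word_map :: "gen list \<Rightarrow> complex \<Rightarrow> complex" where
  "word_map w = foldr (\<lambda>g f. gen_map g \<circ> f) w id"

definition Q2 :: "nat \<Rightarrow> complex set" where
  "Q2 n = {word_map w 0 | w. count_list w GT \<le> n}"

end

theory Submission
  imports Defs
begin

text \<open>Since \<open>\<tau> = \<xi> + \<xi>\<^sup>9\<close> one gets \<open>\<alpha>\<^sub>H = \<xi>\<^sup>2\<close>, and
  \<open>r\<^sub>1 v = - cnj v\<close>, \<open>r\<^sub>2 v = \<xi>\<^sup>3 cnj v\<close>. The reflections are additive and permute the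
  ten roots \<open>\<xi>\<^sup>j\<close>, so they preserve the sums of at most \<open>n\<close> roots, while \<open>T\<close> adds the
  root \<open>\<xi>\<^sup>2\<close>; this gives one inclusion. Conversely, if adding \<open>a\<close> costs one \<open>T\<close>, then
  so does adding \<open>g a\<close> for a reflection \<open>g\<close>, since \<open>g (g x + a) = x + g a\<close>. The orbit
  of \<open>\<xi>\<^sup>2\<close> under \<open>r\<^sub>1\<close> and the rotation \<open>r\<^sub>1 \<circ> r\<^sub>2 = (\<lambda>v. \<xi>\<^sup>2 v)\<close> contains all
  ten roots, so each root in a sum costs one translation.\<close>

definition nat_combinations :: "('i \<Rightarrow> 'a::semiring_1) \<Rightarrow> 'i set \<Rightarrow> nat \<Rightarrow> 'a set" where
  "nat_combinations v I n = {(\<Sum>j\<in>I. of_nat (m j) * v j) | m. (\<Sum>j\<in>I. m j) \<le> n}"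

lemma nat_combinations_mono: "k \<le> n \<Longrightarrow> nat_combinations v I k \<subseteq> nat_combinations v I n"
  unfolding nat_combinations_def by force

lemma nat_combinations_0:
  assumes "finite I"
  shows "nat_combinations v I 0 = {0}"
proof -
  have "(\<Sum>j\<in>I. m j) = 0 \<longleftrightarrow> (\<forall>j\<in>I. m j = 0)" for m :: "_ \<Rightarrow> nat"
    using assms by simp
  then show ?thesis
    unfolding nat_combinations_def by (force intro: exI[of _ "\<lambda>_. 0"])
qed

lemma combination_add_unit:
  fixes v :: "'i \<Rightarrow> 'a::semiring_1"
  assumes "finite I" "j \<in> I"
  shows "(\<Sum>i\<in>I. of_nat (m i + of_bool (i = j)) * v i) = (\<Sum>i\<in>I. of_nat (m i) * v i) + v j"
proof -
  have "(\<Sum>i\<in>I. of_bool (i = j) * v i) = (\<Sum>i\<in>I. if i = j then v i else 0)"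
    by (rule sum.cong) auto
  then show ?thesis
    using assms by (simp add: distrib_right sum.distrib)
qed

lemma nat_combinations_add:
  assumes "finite I" "j \<in> I" "x \<in> nat_combinations v I n"
  shows "x + v j \<in> nat_combinations v I (Suc n)"
proof -
  obtain m where x: "x = (\<Sum>i\<in>I. of_nat (m i) * v i)" and m: "(\<Sum>i\<in>I. m i) \<le> n"
    using assms(3) unfolding nat_combinations_def by blast
  have "(\<Sum>i\<in>I. m i + of_bool (i = j)) = (\<Sum>i\<in>I. m i) + 1"
    using assms(1,2) by (simp add: sum.distrib)
  then show ?thesis
    unfolding nat_combinations_def
    using combination_add_unit[OF assms(1,2), where m = m and v = v] x m
    by (intro CollectI exI[of _ "\<lambda>i. m i + of_bool (i = j)"]) simp
qed

lemma nat_combinations_SucE: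
  assumes "finite I" "x \<in> nat_combinations v I (Suc n)"
  obtains "x \<in> nat_combinations v I n"
  | y j where "y \<in> nat_combinations v I n" "j \<in> I" "x = y + v j"
proof (cases "x \<in> nat_combinations v I n")
  case False
  obtain m where x: "x = (\<Sum>i\<in>I. of_nat (m i) * v i)" and m: "(\<Sum>i\<in>I. m i) \<le> Suc n"
    using assms(2) unfolding nat_combinations_def by blast
  with False have "(\<Sum>i\<in>I. m i) = Suc n"
    unfolding nat_combinations_def by force
  then obtain j where j: "j \<in> I" "m j > 0"
    by (metis Zero_neq_Suc gr0I sum.neutral)
  define m' where "m' i = m i - of_bool (i = j)" for i
  have m_eq: "m i = m' i + of_bool (i = j)" for i
    using j by (simp add: m'_def)
  have "(\<Sum>i\<in>I. m' i) + 1 = Suc n"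
    using \<open>(\<Sum>i\<in>I. m i) = Suc n\<close> assms(1) j(1) by (simp add: m_eq sum.distrib)
  then have "(\<Sum>i\<in>I. of_nat (m' i) * v i) \<in> nat_combinations v I n"
    unfolding nat_combinations_def by auto
  moreover have "x = (\<Sum>i\<in>I. of_nat (m' i) * v i) + v j"
    using combination_add_unit[OF assms(1) j(1), where m = m' and v = v] x by (simp add: m_eq)
  ultimately show ?thesis
    using j that(2) by blast
qed (use that(1) in blast)

lemma nat_combinations_minimal:
  assumes "finite I"
    and "0 \<in> S 0"
    and "\<And>k. S k \<subseteq> S (Suc k)"
    and "\<And>k x j. x \<in> S k \<Longrightarrow> j \<in> I \<Longrightarrow> x + v j \<in> S (Suc k)"
  shows "nat_combinations v I n \<subseteq> S n"
proof (induction n)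
  case 0
  show ?case
    using assms(1,2) by (simp add: nat_combinations_0)
next
  case (Suc n)
  show ?case
  proof
    fix x
    assume "x \<in> nat_combinations v I (Suc n)"
    then show "x \<in> S (Suc n)"
      using Suc assms(3,4) by (cases rule: nat_combinations_SucE[OF assms(1)]) blast+
  qed
qed

lemma nat_combinations_additive_image:
  fixes v :: "'i \<Rightarrow> 'a::ring_1"
  assumes "finite I" "additive f" "\<And>j. j \<in> I \<Longrightarrow> f (v j) \<in> v ` I"
  shows "f ` nat_combinations v I n \<subseteq> nat_combinations v I n"
proof -
  have "nat_combinations v I n \<subseteq> f -` nat_combinations v I n"
  proof (rule nat_combinations_minimal[OF assms(1)])
    show "0 \<in> f -` nat_combinations v I 0"
      using assms(1) additive.zero[OF assms(2)] by (simp add: nat_combinations_0)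
    show "f -` nat_combinations v I k \<subseteq> f -` nat_combinations v I (Suc k)" for k
      using nat_combinations_mono[of k "Suc k"] by auto
    show "x + v j \<in> f -` nat_combinations v I (Suc k)"
      if "x \<in> f -` nat_combinations v I k" "j \<in> I" for k x j
      using that assms(3)[of j] nat_combinations_add[OF assms(1)]
      by (auto simp: additive.add[OF assms(2)])
  qed
  then show ?thesis
    by blast
qed

lemma xi_pow_5: "xi ^ 5 = -1"
  unfolding xi_def by (simp add: DeMoivre)

lemma xi_pow_mod_10: "xi ^ (k mod 10) = xi ^ k"
proof -
  have "xi ^ 10 = 1"
    using xi_pow_5 power_mult[of xi 5 2] by simp
  have "xi ^ k = xi ^ (10 * (k div 10) + k mod 10)"
    by simp
  also have "\<dots> = (xi ^ 10) ^ (k div 10) * xi ^ (k mod 10)"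
    by (simp only: power_add power_mult)
  finally show ?thesis
    using \<open>xi ^ 10 = 1\<close> by simp
qed

lemma cnj_xi: "cnj xi = xi ^ 9"
proof -
  have "cis (- pi / 5) = cis (9 * pi / 5)"
    using cis_multiple_2pi[of 1] cis_mult[of "- pi / 5" "2 * pi"] by simp
  then show ?thesis
    unfolding xi_def by (simp add: cis_cnj DeMoivre)
qed

lemma alpha2_eq: "alpha2 = xi ^ 4"
  unfolding alpha2_def xi_def by (simp add: DeMoivre)

lemma xi_cyclotomic: "xi ^ 4 - xi ^ 3 + xi ^ 2 - xi + 1 = 0"
proof -
  have "Re (xi + 1) > 0"
    unfolding xi_def using cos_gt_zero_pi[of "pi / 5"] pi_gt_zero by simp
  then have "xi + 1 \<noteq> 0"
    by force
  moreover have "(xi + 1) * (xi ^ 4 - xi ^ 3 + xi ^ 2 - xi + 1) = 0"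
    using xi_pow_5 by algebra
  ultimately show ?thesis
    unfolding mult_eq_0_iff by blast
qed

lemma golden_ratio_unique:
  fixes c :: real
  assumes "c > 0" "c\<^sup>2 = c + 1"
  shows "c = tau"
proof -
  have "c \<ge> 1"
  proof (rule ccontr)
    assume "\<not> c \<ge> 1"
    then have "c * c < c * 1"
      using assms(1) by (intro mult_strict_left_mono) auto
    then show False
      using assms(2) by (simp add: power2_eq_square)
  qed
  moreover have "(2 * c - 1)\<^sup>2 = 5"
    using assms(2) by (simp add: power2_eq_square algebra_simps)
  ultimately have "2 * c - 1 = sqrt 5"
    using real_sqrt_abs[of "2 * c - 1"] by simp
  then show ?thesis
    unfolding tau_def by simp
qed

lemma tau_eq: "of_real tau = xi + cnj xi"
proof -
  define c where "c = 2 * cos (pi / 5)"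
  have c: "of_real c = xi + cnj xi"
    unfolding c_def xi_def by (simp add: complex_add_cnj)
  have "of_real (c\<^sup>2 - c - 1) = (xi + xi ^ 9)\<^sup>2 - (xi + xi ^ 9) - (1 :: complex)"
    by (simp add: c cnj_xi)
  also have "\<dots> = 0"
    using xi_pow_5 xi_cyclotomic by algebra
  finally have "c\<^sup>2 = c + 1"
    unfolding of_real_eq_0_iff by simp
  moreover have "c > 0"
    unfolding c_def using cos_gt_zero_pi[of "pi / 5"] pi_gt_zero by simp
  ultimately have "c = tau"
    by (simp add: golden_ratio_unique)
  with c show ?thesis
    by simp
qed

lemma alphaH_eq: "alphaH = xi ^ 2"
proof -
  have "alphaH = (xi + xi ^ 9) * (1 + xi ^ 4)"
    unfolding alphaH_def alpha1_def alpha2_eq tau_eq cnj_xi by simp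
  also have "\<dots> = xi ^ 2"
    using xi_pow_5 xi_cyclotomic by algebra
  finally show ?thesis .
qed

lemma refl_unit:
  assumes "norm a = 1"
  shows "refl a v = - (a\<^sup>2 * cnj v)"
proof -
  have "a * cnj a = 1"
    using complex_norm_square[of a] assms by simp
  moreover have "of_real (2 * Re (v * cnj a)) = v * cnj a + cnj v * a"
    using complex_add_cnj[of "v * cnj a"] by simp
  ultimately show ?thesis
    unfolding refl_def by algebra
qed

lemma r1_eq: "r1 v = - cnj v"
  unfolding r1_def alpha1_def by (simp add: refl_unit)

lemma r2_eq: "r2 v = xi ^ 3 * cnj v"
proof -
  have "r2 v = - ((xi ^ 4)\<^sup>2 * cnj v)"
    unfolding r2_def alpha2_eq[symmetric] by (rule refl_unit) (simp add: alpha2_def)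
  then show ?thesis
    using xi_pow_5 by algebra
qed

lemma r1_r2: "r1 (r2 v) = xi ^ 2 * v"
  unfolding r1_eq r2_eq using xi_pow_5 by (simp add: cnj_xi) algebra

lemma r2_r2: "r2 (r2 v) = v"
  unfolding r2_eq using xi_pow_5 by (simp add: cnj_xi) algebra

lemma r1_xi_pow: "r1 (xi ^ j) = xi ^ (9 * j + 5)"
  by (simp add: r1_eq cnj_xi power_add power_mult xi_pow_5)

lemma r2_xi_pow: "r2 (xi ^ j) = xi ^ (9 * j + 3)"
  by (simp add: r2_eq cnj_xi power_add power_mult)

lemma xi_pow_in_roots: "xi ^ k \<in> (\<lambda>j. xi ^ j) ` {..<10}"
  using xi_pow_mod_10[of k] by (intro image_eqI[of _ _ "k mod 10"]) auto

lemma gen_map_root: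
  assumes "g \<noteq> GT"
  shows "gen_map g (xi ^ j) \<in> (\<lambda>j. xi ^ j) ` {..<10}"
  using assms by (cases g) (simp_all add: r1_xi_pow r2_xi_pow xi_pow_in_roots)

lemma gen_map_involution:
  assumes "g \<noteq> GT"
  shows "gen_map g (gen_map g v) = v"
  using assms by (cases g) (simp_all add: r1_eq r2_r2)

lemma additive_gen_map:
  assumes "g \<noteq> GT"
  shows "additive (gen_map g)"
  using assms by unfold_locales (cases g; simp add: r1_eq r2_eq algebra_simps)

lemma word_map_Cons: "word_map (g # w) = gen_map g \<circ> word_map w"
  by (simp add: word_map_def)

lemma zero_in_Q2: "0 \<in> Q2 n"
  unfolding Q2_def by (rule CollectI, rule exI[of _ "[]"]) (simp add: word_map_def)

lemma Q2_mono: "k \<le> n \<Longrightarrow> Q2 k \<subseteq> Q2 n"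
  unfolding Q2_def by force

lemma Q2_reflection_closed:
  assumes "x \<in> Q2 n" "g \<noteq> GT"
  shows "gen_map g x \<in> Q2 n"
proof -
  obtain w where "x = word_map w 0" "count_list w GT \<le> n"
    using assms(1) unfolding Q2_def by blast
  then have "gen_map g x = word_map (g # w) 0" "count_list (g # w) GT \<le> n"
    using assms(2) by (simp_all add: word_map_Cons)
  then show ?thesis
    unfolding Q2_def by blast
qed

lemma Q2_Tr:
  assumes "x \<in> Q2 n"
  shows "Tr x \<in> Q2 (Suc n)"
proof -
  obtain w where "x = word_map w 0" "count_list w GT \<le> n"
    using assms unfolding Q2_def by blast
  then have "Tr x = word_map (GT # w) 0" "count_list (GT # w) GT \<le> Suc n"
    by (simp_all add: word_map_Cons)
  then show ?thesis
    unfolding Q2_def by blast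
qed

definition Q2_translation :: "complex \<Rightarrow> bool" where
  "Q2_translation a \<longleftrightarrow> (\<forall>n x. x \<in> Q2 n \<longrightarrow> x + a \<in> Q2 (Suc n))"

lemma Q2_translation_reflect:
  assumes "Q2_translation a" "g \<noteq> GT"
  shows "Q2_translation (gen_map g a)"
  unfolding Q2_translation_def
proof (intro allI impI)
  fix n x
  assume "x \<in> Q2 n"
  then have "gen_map g (gen_map g x + a) \<in> Q2 (Suc n)"
    using assms Q2_reflection_closed unfolding Q2_translation_def by blast
  then show "x + gen_map g a \<in> Q2 (Suc n)"
    using assms(2) by (simp add: additive.add[OF additive_gen_map] gen_map_involution)
qed

lemma Q2_translation_rotate:
  assumes "Q2_translation a"
  shows "Q2_translation (xi ^ (2 * k) * a)"
proof (induction k)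
  case 0
  show ?case
    using assms by simp
next
  case (Suc k)
  then have "Q2_translation (r1 (r2 (xi ^ (2 * k) * a)))"
    using Q2_translation_reflect[where g = GR1] Q2_translation_reflect[where g = GR2] by simp
  moreover have "xi ^ (2 * Suc k) * a = xi ^ 2 * (xi ^ (2 * k) * a)"
    by (simp only: mult_Suc_right power_add mult.assoc)
  ultimately show ?case
    by (simp only: r1_r2)
qed

lemma Q2_translation_xi_pow: "Q2_translation (xi ^ j)"
proof -
  define k where "k = (j + 8) div 2"
  define i where "i = 2 + j mod 2"
  have "j + 10 = 2 * k + i"
    unfolding k_def i_def by presburger
  have "xi ^ j = xi ^ (j + 10)"
    using xi_pow_mod_10[of j] xi_pow_mod_10[of "j + 10"] by simp
  also have "\<dots> = xi ^ (2 * k) * xi ^ i"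
    unfolding \<open>j + 10 = 2 * k + i\<close> by (rule power_add)
  finally have "xi ^ j = xi ^ (2 * k) * xi ^ i" .
  moreover have "Q2_translation (xi ^ 2)"
    unfolding Q2_translation_def using Q2_Tr by (simp add: Tr_def alphaH_eq)
  moreover have "Q2_translation (xi ^ 3)"
    using Q2_translation_reflect[OF \<open>Q2_translation (xi ^ 2)\<close>, where g = GR1]
      xi_pow_mod_10[of 23] by (simp add: r1_xi_pow)
  moreover have "i = 2 \<or> i = 3"
    unfolding i_def by presburger
  ultimately show ?thesis
    using Q2_translation_rotate by auto
qed

lemma word_map_in_nat_combinations:
  "word_map w 0 \<in> nat_combinations (\<lambda>j. xi ^ j) {..<10} (count_list w GT)"
proof (induction w)
  case Nil
  show ?case
    by (simp add: word_map_def nat_combinations_0)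
next
  case (Cons g w)
  show ?case
  proof (cases "g = GT")
    case True
    then show ?thesis
      using nat_combinations_add[OF _ _ Cons.IH, where j = 2]
      by (simp add: word_map_Cons Tr_def alphaH_eq)
  next
    case False
    then show ?thesis
      using nat_combinations_additive_image[OF _ additive_gen_map gen_map_root] Cons.IH
      by (auto simp: word_map_Cons)
  qed
qed

lemma nat_combinations_subset_Q2: "nat_combinations (\<lambda>j. xi ^ j) {..<10} n \<subseteq> Q2 n"
  using zero_in_Q2 Q2_mono Q2_translation_xi_pow
  by (intro nat_combinations_minimal) (auto simp: Q2_translation_def)

theorem proposition6p1:
  fixes n :: nat
  shows "Q2 n = {(\<Sum>j<10. of_nat (m j) * xi ^ j) | m :: nat \<Rightarrow> nat. (\<Sum>j<10. m j) \<le> n}"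
proof -
  have "Q2 n \<subseteq> nat_combinations (\<lambda>j. xi ^ j) {..<10} n"
  proof
    fix x
    assume "x \<in> Q2 n"
    then obtain w where "x = word_map w 0" "count_list w GT \<le> n"
      unfolding Q2_def by blast
    then show "x \<in> nat_combinations (\<lambda>j. xi ^ j) {..<10} n"
      using word_map_in_nat_combinations nat_combinations_mono by blast
  qed
  with nat_combinations_subset_Q2 have "Q2 n = nat_combinations (\<lambda>j. xi ^ j) {..<10} n"
    by blast
  then show ?thesis
    unfolding nat_combinations_def by simp
qed

end
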